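(* (a) Let $\alpha\in(\tfrac12,1]$ be rational and $\lambda\in\mathbb N$, and let $k=\lceil \frac{\lambda\alpha}{2\alpha-1}\rceil$. For every profile $P$, every ranking $r$ that Approval Voting may output on $P$ (under any tie-breaking), and every group $N'$ that is $(\alpha,\lambda)$-significant in $P$, we have $\mathrm{avg}(N',r_{\le k})\ge\lambda$. (b) For every rational $\alpha\in(\tfrac12,1]$ and $\lambda\in\mathbb N$, with $k'=\lceil \frac{\lambda\alpha}{2\alpha-1}\rceil-1$, there exist a profile $P$, a group $N'$ that is $(\alpha,\lambda)$-significant in $P$, and a ranking $r$ that Approval Voting may output on $P$ (for some tie-breaking) such that $\mathrm{avg}(N',r_{\le k'})<\lambda$. (c) For every rational $\alpha\in(0,\tfrac12)$, every $\lambda\in\mathbb N$ and every $k\in\mathbb N$, there exist a profile $P$, a group $N'$ that is $(\alpha,\lambda)$-significant in $P$, and a ranking $r$ that Approval Voting may output on $P$ (for some tie-breaking) such that $\mathrm{avg}(N',r_{\le k})<\lambda$. In particular, for $\alpha<\tfrac12$ Approval Voting does not satisfy $\kappa$-group representation for any function $\kappa$.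
   Context: Let $N=[n]$ be a finite set of voters and $A$ a finite set of $m$ alternatives; a profile $P=(A_1,\dots,A_n)$ gives each voter $i$ a non-empty approval set $A_i\subseteq A$. $N_a=\{i: a\in A_i\}$ and $|N_a|$ is the approval score of $a$. A ranking $r=(r_1,\dots,r_m)$ is a linear order of $A$, $r_{\le k}=\{r_1,\dots,r_k\}$, with the convention $r_{\le k}=A$ for $k\ge m$. Approval Voting outputs any ranking with $|N_{r_1}|\ge\dots\ge|N_{r_m}|$ (ties broken arbitrarily). For nonempty $N'\subseteq N$ and $S\subseteq A$, $\mathrm{avg}(N',S)=\frac1{|N'|}\sum_{i\in N'}|A_i\cap S|$. The cohesiveness of $N'$ is $\lambda(N')=|\bigcap_{i\in N'}A_i|$; $N'$ is $(\alpha,\lambda)$-significant in $P$ if $|N'|=\lceil\alpha n\rceil$ and $\lambda(N')\ge\lambda$. Given $\kappa:((0,1]\cap\mathbb Q)\times\mathbb N\to\mathbb N$, a ranking rule satisfies $\kappa$-group representation if for every profile $P$, every output ranking $r$ (under every tie-breaking), every rational $\alpha\in(0,1]$, every $\lambda\in\mathbb N$ and every $(\alpha,\lambda)$-significant $N'$, $\mathrm{avg}(N',r_{\le\kappa(\alpha,\lambda)})\ge\lambda$. *)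

theory Defs
  imports Complex_Main
begin

definition is_profile :: "nat \<Rightarrow> 'a set \<Rightarrow> (nat \<Rightarrow> 'a set) \<Rightarrow> bool" where
  "is_profile n A P \<longleftrightarrow> n \<ge> 1 \<and> finite A \<and> (\<forall>i<n. P i \<noteq> {} \<and> P i \<subseteq> A)"

definition score :: "nat \<Rightarrow> (nat \<Rightarrow> 'a set) \<Rightarrow> 'a \<Rightarrow> nat" where
  "score n P a = card {i. i < n \<and> a \<in> P i}"

definition is_ranking :: "'a set \<Rightarrow> 'a list \<Rightarrow> bool" where
  "is_ranking A r \<longleftrightarrow> distinct r \<and> set r = A"

definition av_output :: "nat \<Rightarrow> 'a set \<Rightarrow> (nat \<Rightarrow> 'a set) \<Rightarrow> 'a list \<Rightarrow> bool" where
  "av_output n A P r \<longleftrightarrow> is_ranking A r \<and> sorted_wrt (\<lambda>a b. score n P a \<ge> score n P b) r"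

text \<open>r_{<=k}; equals A when k >= m.\<close>
definition top_k :: "'a list \<Rightarrow> nat \<Rightarrow> 'a set" where
  "top_k r k = set (take k r)"

definition avg :: "(nat \<Rightarrow> 'a set) \<Rightarrow> nat set \<Rightarrow> 'a set \<Rightarrow> real" where
  "avg P N' S = (\<Sum>i\<in>N'. real (card (P i \<inter> S))) / real (card N')"

definition cohesiveness :: "(nat \<Rightarrow> 'a set) \<Rightarrow> nat set \<Rightarrow> nat" where
  "cohesiveness P N' = card (\<Inter>i\<in>N'. P i)"

definition significant :: "nat \<Rightarrow> (nat \<Rightarrow> 'a set) \<Rightarrow> rat \<Rightarrow> nat \<Rightarrow> nat set \<Rightarrow> bool" where
  "significant n P \<alpha> lam N' \<longleftrightarrow>
     N' \<subseteq> {..<n} \<and> N' \<noteq> {} \<and> card N' = nat \<lceil>\<alpha> * of_nat n\<rceil> \<and> cohesiveness P N' \<ge> lam"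

definition av_kappa_group_rep :: "'a itself \<Rightarrow> (rat \<Rightarrow> nat \<Rightarrow> nat) \<Rightarrow> bool" where
  "av_kappa_group_rep _ \<kappa> \<longleftrightarrow>
     (\<forall>n (A::'a set) P r \<alpha> lam N'. is_profile n A P \<and> av_output n A P r \<and>
        0 < \<alpha> \<and> \<alpha> \<le> 1 \<and> lam \<ge> 1 \<and> significant n P \<alpha> lam N' \<longrightarrow>
        avg P N' (top_k r (\<kappa> \<alpha> lam)) \<ge> real lam)"

end

theory Submission
  imports Defs
begin

text \<open>Let \<open>N'\<close> have size \<open>s \<ge> \<alpha>n\<close> and common approvals \<open>C\<close>, \<open>|C| \<ge> \<lambda>\<close>. If \<open>C\<close> lies inside
  the top \<open>k\<close>, every member of \<open>N'\<close> approves \<open>\<lambda>\<close> of them. Otherwise some \<open>c \<in> C\<close> is ranked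
  below the top \<open>k\<close>, so each of these \<open>k\<close> alternatives has score at least that of \<open>c\<close>, i.e.
  at least \<open>s\<close>; of the resulting \<open>ks\<close> approvals at most \<open>(n - s)k\<close> come from outside \<open>N'\<close>,
  leaving \<open>k(2s - n) \<ge> \<lambda>s\<close> inside once \<open>k \<ge> \<lambda>\<alpha>/(2\<alpha> - 1)\<close>. Both counting steps are tight,
  which yields the matching lower bound, and for \<open>\<alpha> < 1/2\<close> the outsiders alone can fill the
  top of the ranking.\<close>

lemma sum_score_eq_sum_card_inter:
  assumes "finite T"
  shows "(\<Sum>t\<in>T. score n P t) = (\<Sum>i<n. card (P i \<inter> T))"
proof -
  have "(\<Sum>t\<in>T. score n P t) = (\<Sum>t\<in>T. \<Sum>i<n. if t \<in> P i then 1 else 0)"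
    unfolding score_def
    by (rule sum.cong) (auto simp: sum.If_cases intro!: arg_cong[where f = card])
  also have "\<dots> = (\<Sum>i<n. \<Sum>t\<in>T. if t \<in> P i then 1 else 0)"
    by (rule sum.swap)
  also have "\<dots> = (\<Sum>i<n. card (P i \<inter> T))"
    using assms by (intro sum.cong) (auto simp: sum.If_cases Int_commute)
  finally show ?thesis .
qed

lemma sum_score_le_sum_card_inter:
  assumes "N' \<subseteq> {..<n}" and "finite T"
  shows "(\<Sum>t\<in>T. score n P t) \<le> (\<Sum>i\<in>N'. card (P i \<inter> T)) + (n - card N') * card T"
proof -
  have "(\<Sum>t\<in>T. score n P t) = (\<Sum>i\<in>N'. card (P i \<inter> T)) + (\<Sum>i\<in>{..<n} - N'. card (P i \<inter> T))"
    using assms by (simp add: sum_score_eq_sum_card_inter sum.subset_diff)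
  also have "(\<Sum>i\<in>{..<n} - N'. card (P i \<inter> T)) \<le> (\<Sum>i\<in>{..<n} - N'. card T)"
    using assms(2) by (intro sum_mono card_mono) auto
  also have "\<dots> = (n - card N') * card T"
    using assms(1) by (simp add: card_Diff_subset finite_subset)
  finally show ?thesis by simp
qed

lemma card_top_k_if_not_in_top_k:
  assumes "distinct r" and "c \<in> set r" and "c \<notin> top_k r k"
  shows "card (top_k r k) = k"
proof -
  have "k < length r"
    using assms(2,3) by (metis not_less take_all top_k_def)
  then show ?thesis
    using assms(1) by (simp add: top_k_def distinct_card)
qed

lemma av_output_score_le_top_k:
  assumes "av_output n A P r" and "c \<in> A" and "c \<notin> top_k r k" and "t \<in> top_k r k"
  shows "score n P c \<le> score n P t"
proof -
  have sorted: "sorted_wrt (\<lambda>a b. score n P b \<le> score n P a) r" and "set r = A"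
    using assms(1) by (auto simp: av_output_def is_ranking_def)
  then obtain j where j: "j < length r" "r ! j = c"
    using assms(2) by (metis in_set_conv_nth)
  obtain i where i: "i < k" "i < length r" "r ! i = t"
    using assms(4) by (auto simp: top_k_def in_set_conv_nth)
  have "k \<le> j"
    using j assms(3) by (metis in_set_conv_nth length_take min_less_iff_conj nth_take not_le top_k_def)
  with i j sorted show ?thesis
    by (auto simp: sorted_wrt_iff_nth_less)
qed

lemma le_avg_iff:
  assumes "finite N'" and "N' \<noteq> {}"
  shows "real m \<le> avg P N' S \<longleftrightarrow> m * card N' \<le> (\<Sum>i\<in>N'. card (P i \<inter> S))"
proof -
  have "real m \<le> avg P N' S \<longleftrightarrow> real (m * card N') \<le> real (\<Sum>i\<in>N'. card (P i \<inter> S))"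
    using assms by (simp add: avg_def pos_le_divide_eq card_gt_0_iff)
  then show ?thesis
    by (simp only: of_nat_le_iff)
qed

lemma of_nat_nat_ceiling_ge: "x \<le> of_nat (nat \<lceil>x\<rceil>)"
  for x :: "'a :: floor_ceiling"
  by (metis le_of_int_ceiling nat_0_le nat_le_0 of_int_of_nat_eq of_nat_0 order_trans
      le_cases of_int_le_iff)

lemma mult_le_of_ge_representation_bound:
  fixes \<alpha> :: "'a :: linordered_field"
  assumes "1/2 < \<alpha>" and k: "of_nat lam * \<alpha> / (2 * \<alpha> - 1) \<le> of_nat k"
    and s: "\<alpha> * of_nat n \<le> of_nat s"
  shows "int lam * int s \<le> int k * (2 * int s - int n)"
proof -
  have "of_nat lam * \<alpha> \<le> of_nat k * (2 * \<alpha> - 1)"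
    using k assms(1) by (simp add: pos_divide_le_eq)
  then have k_le: "of_nat k \<le> \<alpha> * (2 * of_nat k - of_nat lam)"
    by (simp add: algebra_simps)
  moreover have "0 < \<alpha>"
    using assms(1) by (simp add: less_trans[OF _ assms(1)])
  ultimately have "0 \<le> 2 * of_nat k - (of_nat lam :: 'a)"
    by (metis of_nat_0_le_iff order_trans zero_le_mult_iff not_le)
  then have "\<alpha> * of_nat n * (2 * of_nat k - of_nat lam) \<le> of_nat s * (2 * of_nat k - of_nat lam)"
    by (rule mult_right_mono[OF s])
  moreover have "of_nat n * of_nat k \<le> of_nat n * (\<alpha> * (2 * of_nat k - of_nat lam))"
    using k_le by (simp add: mult_left_mono)
  ultimately have "of_nat lam * of_nat s \<le> (of_nat k * (2 * of_nat s - of_nat n) :: 'a)"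
    by (simp add: algebra_simps)
  then have "(of_int (int lam * int s) :: 'a) \<le> of_int (int k * (2 * int s - int n))"
    by simp
  then show ?thesis
    by (simp only: of_int_le_iff)
qed

lemma av_output_overlap_top_k_ge:
  assumes "av_output n A P r" and "N' \<subseteq> {..<n}"
    and "c \<in> A" and "\<forall>i\<in>N'. c \<in> P i" and "c \<notin> top_k r k"
  shows "int k * (2 * int (card N') - int n) \<le> int (\<Sum>i\<in>N'. card (P i \<inter> top_k r k))"
proof -
  let ?T = "top_k r k" and ?s = "card N'"
  have "finite ?T" by (simp add: top_k_def)
  have "?s \<le> n"
    using assms(2) by (metis card_lessThan card_mono finite_lessThan)
  have "?s \<le> score n P c"
    unfolding score_def using assms(2,4) by (intro card_mono) auto
  then have "\<forall>t\<in>?T. ?s \<le> score n P t"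
    using av_output_score_le_top_k[OF assms(1,3,5)] order_trans by blast
  moreover have "card ?T = k"
    using assms(1,3,5) by (intro card_top_k_if_not_in_top_k) (auto simp: av_output_def is_ranking_def)
  ultimately have "k * ?s \<le> (\<Sum>t\<in>?T. score n P t)"
    using sum_mono[of ?T "\<lambda>_. ?s" "score n P"] by simp
  also have "\<dots> \<le> (\<Sum>i\<in>N'. card (P i \<inter> ?T)) + (n - ?s) * k"
    using sum_score_le_sum_card_inter[OF assms(2) \<open>finite ?T\<close>] \<open>card ?T = k\<close> by simp
  finally have "int (k * ?s) \<le> int ((\<Sum>i\<in>N'. card (P i \<inter> ?T)) + (n - ?s) * k)"
    by (simp only: of_nat_le_iff)
  with \<open>?s \<le> n\<close> show ?thesis
    by (simp only: of_nat_mult of_nat_add of_nat_diff) (simp add: algebra_simps)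
qed

lemma av_output_avg_top_k_ge:
  fixes \<alpha> :: rat
  assumes "1/2 < \<alpha>" and "is_profile n A P" and "av_output n A P r"
    and sig: "significant n P \<alpha> lam N'"
  shows "real lam \<le> avg P N' (top_k r (nat \<lceil>of_nat lam * \<alpha> / (2 * \<alpha> - 1)\<rceil>))"
proof -
  define k where "k = nat \<lceil>of_nat lam * \<alpha> / (2 * \<alpha> - 1)\<rceil>"
  let ?T = "top_k r k" and ?C = "\<Inter>i\<in>N'. P i"
  have N': "N' \<subseteq> {..<n}" "N' \<noteq> {}" "card N' = nat \<lceil>\<alpha> * of_nat n\<rceil>" and "lam \<le> card ?C"
    using sig by (auto simp: significant_def cohesiveness_def)
  have "finite N'"
    using N'(1) finite_subset by blast
  have "lam * card N' \<le> (\<Sum>i\<in>N'. card (P i \<inter> ?T))"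
  proof (cases "?C \<subseteq> ?T")
    case True
    have "lam \<le> card (P i \<inter> ?T)" if "i \<in> N'" for i
    proof -
      have "?C \<subseteq> P i \<inter> ?T"
        using True that by blast
      then have "card ?C \<le> card (P i \<inter> ?T)"
        by (intro card_mono) (simp_all add: top_k_def)
      then show ?thesis
        using \<open>lam \<le> card ?C\<close> by simp
    qed
    then show ?thesis
      using sum_mono[of N' "\<lambda>_. lam"] by (simp add: mult.commute)
  next
    case False
    then obtain c where "c \<in> ?C" and "c \<notin> ?T"
      by blast
    moreover have "c \<in> A"
      using \<open>c \<in> ?C\<close> N'(1,2) assms(2) by (auto simp: is_profile_def)
    ultimately have "int k * (2 * int (card N') - int n) \<le> int (\<Sum>i\<in>N'. card (P i \<inter> ?T))"
      using N'(1) by (intro av_output_overlap_top_k_ge[OF assms(3)]) auto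
    moreover have "int lam * int (card N') \<le> int k * (2 * int (card N') - int n)"
    proof (rule mult_le_of_ge_representation_bound[OF assms(1)])
      show "of_nat lam * \<alpha> / (2 * \<alpha> - 1) \<le> of_nat k"
        unfolding k_def by (rule of_nat_nat_ceiling_ge)
      show "\<alpha> * of_nat n \<le> of_nat (card N')"
        unfolding N'(3) by (rule of_nat_nat_ceiling_ge)
    qed
    ultimately have "int (lam * card N') \<le> int (\<Sum>i\<in>N'. card (P i \<inter> ?T))"
      by simp
    then show ?thesis
      by (simp only: of_nat_le_iff)
  qed
  then show ?thesis
    unfolding k_def[symmetric] using le_avg_iff[OF \<open>finite N'\<close> N'(2)] by blast
qed

lemma rat_eq_nat_fraction_in_half_one:
  fixes \<alpha> :: rat
  assumes "1/2 < \<alpha>" and "\<alpha> \<le> 1"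
  obtains p q :: nat where "\<alpha> * of_nat q = of_nat p" and "p \<le> q" and "q < 2 * p"
proof -
  obtain p q where pq: "quotient_of \<alpha> = (p, q)"
    by (cases "quotient_of \<alpha>") auto
  have "0 < q"
    using pq quotient_of_denom_pos by blast
  have "\<alpha> * of_int q = of_int p"
    using quotient_of_div[OF pq] \<open>0 < q\<close> by simp
  moreover have "\<alpha> * of_int q \<le> of_int q" and "of_int q < 2 * (\<alpha> * of_int q)"
    using assms \<open>0 < q\<close> by (simp_all add: mult_le_cancel_right1 mult_less_cancel_right)
  ultimately have "of_int p \<le> (of_int q :: rat)" and "of_int q < (of_int (2 * p) :: rat)"
    by simp_all
  then have "p \<le> q" and "q < 2 * p"
    by (simp_all only: of_int_le_iff of_int_less_iff)
  with \<open>\<alpha> * of_int q = of_int p\<close> show ?thesis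
    by (intro that[where p = "nat p" and q = "nat q"]) simp_all
qed

text \<open>The extremal profile for part (b): of the first \<open>s\<close> voters, \<open>2s - n\<close> approve the
  fillers \<open>{0..<K}\<close> together with the cohesive block \<open>{K..<K+lam}\<close> and the rest approve only
  the block; the remaining \<open>n - s\<close> voters approve the fillers and one extra alternative \<open>K + lam\<close>
  (which keeps their ballots nonempty when \<open>K = 0\<close>). Every
  filler and every block member then has score \<open>s\<close>, so the fillers may be ranked first.\<close>

definition tight_profile :: "nat \<Rightarrow> nat \<Rightarrow> nat \<Rightarrow> nat \<Rightarrow> nat \<Rightarrow> nat set" where
  "tight_profile n s K lam i =
     (if i < 2 * s - n then {0..<K + lam} else if i < s then {K..<K + lam} else insert (K + lam) {0..<K})"

lemma score_tight_profile:
  assumes "s \<le> n" and "n \<le> 2 * s"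
  shows "score n (tight_profile n s K lam) a =
           (if a < K + lam then s else if a = K + lam then n - s else 0)"
proof -
  let ?N = "{i. i < n \<and> a \<in> tight_profile n s K lam i}"
  consider "a < K" | "K \<le> a" "a < K + lam" | "a = K + lam" | "K + lam < a"
    by linarith
  then show ?thesis
  proof cases
    case 1
    then have "?N = {..<2 * s - n} \<union> {s..<n}"
      using assms by (auto simp: tight_profile_def)
    moreover have "card ({..<2 * s - n} \<union> {s..<n}) = s"
      using assms by (subst card_Un_disjoint) auto
    ultimately show ?thesis
      using 1 by (simp add: score_def)
  next
    case 2
    then have "?N = {..<s}"
      using assms by (auto simp: tight_profile_def)
    then show ?thesis
      using 2 by (simp add: score_def)
  next
    case 3
    then have "?N = {s..<n}"
      using assms by (auto simp: tight_profile_def)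
    then show ?thesis
      using 3 by (simp add: score_def)
  next
    case 4
    then have "?N = {}"
      by (auto simp: tight_profile_def)
    then show ?thesis
      using 4 by (simp add: score_def)
  qed
qed

lemma av_output_tight_profile:
  assumes "s \<le> n" and "n \<le> 2 * s"
  shows "av_output n {0..<K + lam + 1} (tight_profile n s K lam) [0..<K + lam + 1]"
  using assms
  by (auto simp del: upt_Suc simp: av_output_def is_ranking_def sorted_wrt_iff_nth_less score_tight_profile)

lemma significant_tight_profile:
  assumes "\<alpha> * of_nat n = of_nat s" and "1 \<le> s" and "s \<le> n"
  shows "significant n (tight_profile n s K lam) \<alpha> lam {..<s}"
proof -
  have "{K..<K + lam} \<subseteq> (\<Inter>i\<in>{..<s}. tight_profile n s K lam i)"
    by (auto simp: tight_profile_def)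
  moreover have "(\<Inter>i\<in>{..<s}. tight_profile n s K lam i) \<subseteq> tight_profile n s K lam 0"
    using \<open>1 \<le> s\<close> by auto
  then have "finite (\<Inter>i\<in>{..<s}. tight_profile n s K lam i)"
    by (rule finite_subset) (simp add: tight_profile_def)
  ultimately have "lam \<le> cohesiveness (tight_profile n s K lam) {..<s}"
    unfolding cohesiveness_def by (metis card_atLeastLessThan card_mono add_diff_cancel_left')
  then show ?thesis
    using assms by (auto simp: significant_def lessThan_empty_iff)
qed

lemma sum_card_inter_tight_profile:
  assumes "s \<le> n"
  shows "(\<Sum>i<s. card (tight_profile n s K lam i \<inter> {0..<K})) = (2 * s - n) * K"
proof -
  have "(\<Sum>i<s. card (tight_profile n s K lam i \<inter> {0..<K})) = (\<Sum>i<s. if i < 2 * s - n then K else 0)"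
    by (rule sum.cong) (auto simp: tight_profile_def Int_absorb2 Int_commute)
  also have "\<dots> = (\<Sum>i\<in>{i \<in> {..<s}. i < 2 * s - n}. K)"
    by (rule sum.inter_filter[symmetric]) simp
  also have "{i \<in> {..<s}. i < 2 * s - n} = {..<2 * s - n}"
    using assms by auto
  finally show ?thesis
    by simp
qed

lemma mult_less_of_less_representation_bound:
  fixes \<alpha> :: "'a :: linordered_field"
  assumes "1/2 < \<alpha>" and "of_nat k < of_nat lam * \<alpha> / (2 * \<alpha> - 1)"
    and "\<alpha> * of_nat n = of_nat s" and "0 < n"
  shows "int k * (2 * int s - int n) < int lam * int s"
proof -
  have "of_nat k * (2 * \<alpha> - 1) < of_nat lam * \<alpha>"
    using assms(1,2) by (simp add: less_divide_eq)
  then have "of_nat k * (2 * \<alpha> - 1) * of_nat n < of_nat lam * \<alpha> * of_nat n"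
    using assms(4) by simp
  then have "of_nat k * (2 * (\<alpha> * of_nat n) - of_nat n) < of_nat lam * (\<alpha> * of_nat n)"
    by (simp add: algebra_simps)
  then have "(of_int (int k * (2 * int s - int n)) :: 'a) < of_int (int lam * int s)"
    unfolding assms(3) by simp
  then show ?thesis
    by (simp only: of_int_less_iff)
qed

lemma exists_av_output_avg_top_k_less:
  fixes \<alpha> :: rat
  assumes "1/2 < \<alpha>" and "\<alpha> \<le> 1" and "1 \<le> lam"
  shows "\<exists>n (A::nat set) P r N'. is_profile n A P \<and> significant n P \<alpha> lam N' \<and> av_output n A P r \<and>
           avg P N' (top_k r (nat (\<lceil>of_nat lam * \<alpha> / (2 * \<alpha> - 1)\<rceil> - 1))) < real lam"
proof -
  obtain s n where "\<alpha> * of_nat n = of_nat s" "s \<le> n" "n < 2 * s"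
    using rat_eq_nat_fraction_in_half_one assms(1,2) by blast
  define x where "x = of_nat lam * \<alpha> / (2 * \<alpha> - 1)"
  define K where "K = nat (\<lceil>x\<rceil> - 1)"
  let ?P = "tight_profile n s K lam"
  have "0 < x"
    unfolding x_def using assms(1,3) by simp
  then have "of_nat K < x"
    unfolding K_def by (simp add: of_nat_nat ceiling_less_iff flip: ceiling_le_iff) linarith
  then have "int K * (2 * int s - int n) < int lam * int s"
    unfolding x_def using assms(1) \<open>\<alpha> * of_nat n = of_nat s\<close> \<open>s \<le> n\<close> \<open>n < 2 * s\<close>
    by (intro mult_less_of_less_representation_bound) auto
  then have "int ((2 * s - n) * K) < int (lam * s)"
    using \<open>n < 2 * s\<close> by (simp add: of_nat_diff algebra_simps)
  then have "(2 * s - n) * K < lam * s"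
    by (simp only: of_nat_less_iff)
  then have "\<not> lam * card {..<s} \<le> (\<Sum>i<s. card (?P i \<inter> {0..<K}))"
    using \<open>s \<le> n\<close> by (simp add: sum_card_inter_tight_profile)
  moreover have "0 < s"
    using \<open>n < 2 * s\<close> by simp
  ultimately have "avg ?P {..<s} (top_k [0..<K + lam + 1] K) < real lam"
    using le_avg_iff[of "{..<s}" lam ?P "{0..<K}"] by (simp add: top_k_def take_upt not_le lessThan_empty_iff)
  moreover have "is_profile n {0..<K + lam + 1} ?P"
    using \<open>s \<le> n\<close> \<open>n < 2 * s\<close> assms(3) by (auto simp: is_profile_def tight_profile_def)
  moreover have "significant n ?P \<alpha> lam {..<s}"
    using \<open>\<alpha> * of_nat n = of_nat s\<close> \<open>0 < s\<close> \<open>s \<le> n\<close> by (intro significant_tight_profile) auto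
  moreover have "av_output n {0..<K + lam + 1} ?P [0..<K + lam + 1]"
    using \<open>s \<le> n\<close> \<open>n < 2 * s\<close> by (intro av_output_tight_profile) auto
  ultimately show ?thesis
    unfolding x_def[symmetric] K_def[symmetric] by blast
qed

text \<open>For \<open>\<alpha> < 1/2\<close> two voters suffice, since \<open>\<lceil>2\<alpha>\<rceil> = 1\<close>: one approves a block of \<open>lam\<close>
  alternatives, the other at least \<open>k\<close> different ones, and all alternatives tie with score 1.\<close>

lemma exists_av_output_avg_top_k_zero:
  fixes \<alpha> :: rat
  assumes "0 < \<alpha>" and "\<alpha> < 1/2" and "1 \<le> lam"
  shows "\<exists>n (A::nat set) P r N'. is_profile n A P \<and> significant n P \<alpha> lam N' \<and> av_output n A P r \<and>
           avg P N' (top_k r k) < real lam"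
proof -
  define K where "K = max 1 k"
  define P where "P = (\<lambda>i::nat. if i = 0 then {K..<K + lam} else {0..<K})"
  have "is_profile 2 {0..<K + lam} P"
    unfolding is_profile_def P_def K_def using assms(3) by auto
  moreover have "\<lceil>\<alpha> * 2\<rceil> = 1"
    using assms(1,2) by (intro ceiling_unique) auto
  then have "significant 2 P \<alpha> lam {0}"
    by (simp add: significant_def cohesiveness_def P_def)
  moreover have "score 2 P a = 1" if "a < K + lam" for a
  proof -
    have "{i. i < 2 \<and> a \<in> P i} = (if a < K then {1} else {0})"
      using that by (auto simp: P_def)
    then show ?thesis
      by (simp add: score_def)
  qed
  then have "av_output 2 {0..<K + lam} P [0..<K + lam]"
    by (auto simp: av_output_def is_ranking_def sorted_wrt_iff_nth_less)
  moreover have "P 0 \<inter> top_k [0..<K + lam] k = {}"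
    unfolding top_k_def P_def K_def by (auto simp: take_upt)
  then have "avg P {0} (top_k [0..<K + lam] k) < real lam"
    using assms(3) by (simp add: avg_def)
  ultimately show ?thesis
    by blast
qed

lemma not_av_kappa_group_rep: "\<not> av_kappa_group_rep TYPE(nat) \<kappa>"
proof
  assume rep: "av_kappa_group_rep TYPE(nat) \<kappa>"
  obtain n and A :: "nat set" and P r N' where
    "is_profile n A P" "significant n P (1/4) 1 N'" "av_output n A P r"
    "avg P N' (top_k r (\<kappa> (1/4) 1)) < 1"
    using exists_av_output_avg_top_k_zero[of "1/4" 1 "\<kappa> (1/4) 1"] by auto
  then show False
    using rep[unfolded av_kappa_group_rep_def, rule_format, of n A P r "1/4" 1 N'] by simp
qed

theorem theorem2:
  shows
   "(\<forall>(\<alpha>::rat) (lam::nat) n (A::'a set) P r N'.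
       1/2 < \<alpha> \<and> \<alpha> \<le> 1 \<and> lam \<ge> 1 \<and> is_profile n A P \<and> av_output n A P r \<and>
       significant n P \<alpha> lam N' \<longrightarrow>
       avg P N' (top_k r (nat \<lceil>of_nat lam * \<alpha> / (2 * \<alpha> - 1)\<rceil>)) \<ge> real lam)
  \<and> (\<forall>(\<alpha>::rat) (lam::nat). 1/2 < \<alpha> \<and> \<alpha> \<le> 1 \<and> lam \<ge> 1 \<longrightarrow>
       (\<exists>n (A::nat set) P r N'. is_profile n A P \<and> significant n P \<alpha> lam N' \<and>
          av_output n A P r \<and>
          avg P N' (top_k r (nat (\<lceil>of_nat lam * \<alpha> / (2 * \<alpha> - 1)\<rceil> - 1))) < real lam))
  \<and> (\<forall>(\<alpha>::rat) (lam::nat) (k::nat). 0 < \<alpha> \<and> \<alpha> < 1/2 \<and> lam \<ge> 1 \<and> k \<ge> 1 \<longrightarrow>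
       (\<exists>n (A::nat set) P r N'. is_profile n A P \<and> significant n P \<alpha> lam N' \<and>
          av_output n A P r \<and> avg P N' (top_k r k) < real lam))
  \<and> (\<forall>\<kappa>. \<not> av_kappa_group_rep TYPE(nat) \<kappa>)"
  using av_output_avg_top_k_ge exists_av_output_avg_top_k_less exists_av_output_avg_top_k_zero
    not_av_kappa_group_rep
  by blast

end
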